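(* Let $A=\mathrm{diag}(\mathbf{a})$ with $\mathbf{a}\in\mathbb{R}^n$, $\beta>0$, and $f(\mathbf{z})=\frac12\mathbf{z}^*A\mathbf{z}+\frac{\beta}{2}\sum_k|z_k|^4$ on $\mathbb{CS}^{n-1}$. Then the KL exponent of $\min_{\mathbf{z}\in\mathbb{CS}^{n-1}}f(\mathbf{z})$ is $\frac14$.
   Context: $\mathbb{CS}^{n-1}$ is the unit sphere of $\mathbb{C}^n$. For $\mathbf{y}\in\mathbb{CS}^{n-1}$ let $\lambda(\mathbf{y})=\frac12\mathbf{y}^*A\mathbf{y}+\beta\|\mathbf{y}\|_4^4$ and $\|\mathrm{grad} f(\mathbf{y})\|=\sqrt2\,\big\|\frac12A\mathbf{y}+\beta\,\mathrm{diag}(|y_1|^2,\dots,|y_n|^2)\mathbf{y}-\lambda(\mathbf{y})\mathbf{y}\big\|_2$ (norm of the Riemannian Wirtinger gradient). $\mathbf{z}$ is a stationary point if $\mathrm{grad} f(\mathbf{z})=0$. The Łojasiewicz inequality with exponent $\theta\in(0,\frac12]$ holds at a stationary point $\mathbf{z}$ if there are $\delta_{\mathbf{z}},\eta_{\mathbf{z}}>0$ with $|f(\mathbf{y})-f(\mathbf{z})|^{1-\theta}\le\eta_{\mathbf{z}}\|\mathrm{grad} f(\mathbf{y})\|$ for all $\mathbf{y}\in\mathbb{CS}^{n-1}$ with $\|\mathbf{y}-\mathbf{z}\|<\delta_{\mathbf{z}}$. The KL exponent of the problem is the largest $\theta\in(0,\frac12]$ such that this inequality holds at every stationary point. *)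

theory Defs
  imports Complex_Main
begin

text \<open>Vectors in C^n are represented as functions nat => complex; only the
  coordinates k < n are relevant. A = diag(a) with a :: nat => real.\<close>

definition csphere :: "nat \<Rightarrow> (nat \<Rightarrow> complex) set" where
  "csphere n = {y. (\<Sum>k<n. (cmod (y k))^2) = 1}"

definition cdist :: "nat \<Rightarrow> (nat \<Rightarrow> complex) \<Rightarrow> (nat \<Rightarrow> complex) \<Rightarrow> real" where
  "cdist n y z = sqrt (\<Sum>k<n. (cmod (y k - z k))^2)"

definition fobj :: "nat \<Rightarrow> (nat \<Rightarrow> real) \<Rightarrow> real \<Rightarrow> (nat \<Rightarrow> complex) \<Rightarrow> real" where
  "fobj n a \<beta> z = Re ((1/2) * (\<Sum>k<n. cnj (z k) * complex_of_real (a k) * z k))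
     + \<beta> / 2 * (\<Sum>k<n. (cmod (z k))^4)"

definition lam :: "nat \<Rightarrow> (nat \<Rightarrow> real) \<Rightarrow> real \<Rightarrow> (nat \<Rightarrow> complex) \<Rightarrow> real" where
  "lam n a \<beta> y = Re ((1/2) * (\<Sum>k<n. cnj (y k) * complex_of_real (a k) * y k))
     + \<beta> * (\<Sum>k<n. (cmod (y k))^4)"

text \<open>norm of the Riemannian Wirtinger gradient:
  sqrt 2 * || 1/2 A y + beta diag(|y_1|^2,...,|y_n|^2) y - lambda(y) y ||_2\<close>
definition gradnorm :: "nat \<Rightarrow> (nat \<Rightarrow> real) \<Rightarrow> real \<Rightarrow> (nat \<Rightarrow> complex) \<Rightarrow> real" where
  "gradnorm n a \<beta> y = sqrt 2 * sqrt (\<Sum>k<n. (cmod (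
      (1/2) * complex_of_real (a k) * y k
      + complex_of_real (\<beta> * (cmod (y k))^2) * y k
      - complex_of_real (lam n a \<beta> y) * y k))^2)"

definition stationary :: "nat \<Rightarrow> (nat \<Rightarrow> real) \<Rightarrow> real \<Rightarrow> (nat \<Rightarrow> complex) \<Rightarrow> bool" where
  "stationary n a \<beta> z \<longleftrightarrow> z \<in> csphere n \<and> gradnorm n a \<beta> z = 0"

definition loj_at :: "nat \<Rightarrow> (nat \<Rightarrow> real) \<Rightarrow> real \<Rightarrow> real \<Rightarrow> (nat \<Rightarrow> complex) \<Rightarrow> bool" where
  "loj_at n a \<beta> \<theta> z \<longleftrightarrow> (\<exists>\<delta>>0. \<exists>\<eta>>0. \<forall>y\<in>csphere n. cdist n y z < \<delta> \<longrightarrow>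
      \<bar>fobj n a \<beta> y - fobj n a \<beta> z\<bar> powr (1 - \<theta>) \<le> \<eta> * gradnorm n a \<beta> y)"

definition kl_holds :: "nat \<Rightarrow> (nat \<Rightarrow> real) \<Rightarrow> real \<Rightarrow> real \<Rightarrow> bool" where
  "kl_holds n a \<beta> \<theta> \<longleftrightarrow> (\<forall>z. stationary n a \<beta> z \<longrightarrow> loj_at n a \<beta> \<theta> z)"

definition is_kl_exponent :: "nat \<Rightarrow> (nat \<Rightarrow> real) \<Rightarrow> real \<Rightarrow> real \<Rightarrow> bool" where
  "is_kl_exponent n a \<beta> \<theta> \<longleftrightarrow> \<theta> \<in> {0<..1/2} \<and> kl_holds n a \<beta> \<theta> \<and>
      (\<forall>\<theta>'\<in>{0<..1/2}. kl_holds n a \<beta> \<theta>' \<longrightarrow> \<theta>' \<le> \<theta>)"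

end

theory Submission
  imports Defs
begin

(* In the coordinates p_k = |z_k|^2 the objective is the separable quadratic
   F(p) = sum_k (a_k p_k + beta p_k^2) / 2 on the simplex, and |grad f|^2 / 2 is the
   p-weighted variance V of the partial derivatives a_k / 2 + beta p_k.  Near a critical
   point q with support S, the bound V <= w^3 forces |beta (p_k - q_k) - s| <= w on S for
   a common shift s, while for an index off S either the excess a_k / 2 - mu of its
   partial derivative at q is nonzero, and then p_k = O(w^3), or it vanishes, and then
   p_k = O(w).  Hence |F(p) - F(q)| = O(w^2) = O(V^(2/3)),
   which is the Lojasiewicz inequality with exponent 1/4.  The exponent cannot be improved:
   for n = 2, a = (0, 2), beta = 1 and the stationary point (1, 0), the path
   (sqrt (1 - t), sqrt t) has f - f(z) = t^2 but a gradient of order t^(3/2). *)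

lemma le_one_of_sum_eq_one:
  fixes p :: "nat \<Rightarrow> real"
  assumes "\<And>k. k < n \<Longrightarrow> 0 \<le> p k" "(\<Sum>k<n. p k) = 1" "k < n"
  shows "p k \<le> 1"
proof -
  have "p k \<le> (\<Sum>k<n. p k)"
    using assms(1,3) by (intro member_le_sum) auto
  then show ?thesis using assms(2) by simp
qed

lemma cube_le_of_le_sq:
  fixes X C \<omega> :: real
  assumes "0 \<le> X" "X \<le> C * \<omega>\<^sup>2"
  shows "X ^ 3 \<le> C ^ 3 * (\<omega> ^ 3)\<^sup>2"
proof -
  have "X ^ 3 \<le> (C * \<omega>\<^sup>2) ^ 3"
    using assms by (intro power_mono) auto
  also have "\<dots> = C ^ 3 * (\<omega> ^ 3)\<^sup>2"
    by (simp add: power_mult_distrib flip: power_mult)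
  finally show ?thesis .
qed

lemma powr_three_quarters_le:
  fixes X V K :: real
  assumes "0 \<le> X" "0 \<le> V" "0 \<le> K" "X ^ 3 \<le> K * V\<^sup>2"
  shows "X powr (3/4) \<le> K powr (1/4) * sqrt V"
proof -
  have "X powr (3/4) = (X powr 3) powr (1/4)"
    by (simp only: powr_powr) simp
  also have "\<dots> = (X ^ 3) powr (1/4)"
    using assms(1) by simp
  also have "\<dots> \<le> (K * V\<^sup>2) powr (1/4)"
    using assms(1,4) by (intro powr_mono2) auto
  also have "\<dots> = K powr (1/4) * (V powr 2) powr (1/4)"
    using assms(2) by (simp add: powr_mult)
  also have "(V powr 2) powr (1/4) = sqrt V"
    using assms(2) by (simp only: powr_powr) (simp add: powr_half_sqrt)
  finally show ?thesis .
qed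

section \<open>Reduction to the simplex\<close>

definition sqmod :: "(nat \<Rightarrow> complex) \<Rightarrow> nat \<Rightarrow> real" where
  "sqmod y k = (cmod (y k))\<^sup>2"

definition simplex_obj :: "nat \<Rightarrow> (nat \<Rightarrow> real) \<Rightarrow> real \<Rightarrow> (nat \<Rightarrow> real) \<Rightarrow> real" where
  "simplex_obj n a \<beta> p = (\<Sum>k<n. a k / 2 * p k + \<beta> / 2 * (p k)\<^sup>2)"

definition simplex_residual ::
  "nat \<Rightarrow> (nat \<Rightarrow> real) \<Rightarrow> real \<Rightarrow> (nat \<Rightarrow> real) \<Rightarrow> real \<Rightarrow> real" where
  "simplex_residual n a \<beta> p l = (\<Sum>k<n. p k * (a k / 2 + \<beta> * p k - l)\<^sup>2)"

lemma simplex_residual_nonneg: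
  assumes "\<And>k. k < n \<Longrightarrow> 0 \<le> p k"
  shows "0 \<le> simplex_residual n a \<beta> p l"
  unfolding simplex_residual_def using assms by (intro sum_nonneg) auto

lemma Re_diag_quadratic_form:
  "Re ((1/2) * (\<Sum>k<n. cnj (y k) * complex_of_real (a k) * y k)) = (\<Sum>k<n. a k / 2 * sqmod y k)"
proof -
  have "Re (cnj w * complex_of_real r * w) = r * (cmod w)\<^sup>2" for w r
    unfolding cmod_power2 by (simp add: power2_eq_square algebra_simps)
  then show ?thesis
    by (simp add: sum_divide_distrib sqmod_def)
qed

lemma fobj_eq_simplex_obj: "fobj n a \<beta> y = simplex_obj n a \<beta> (sqmod y)"
  unfolding fobj_def simplex_obj_def Re_diag_quadratic_form
  by (simp add: sum.distrib sum_distrib_left sqmod_def power_mult[symmetric])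

lemma lam_eq_sum_sqmod:
  "lam n a \<beta> y = (\<Sum>k<n. a k / 2 * sqmod y k + \<beta> * (sqmod y k)\<^sup>2)"
  unfolding lam_def Re_diag_quadratic_form
  by (simp add: sum.distrib sum_distrib_left sqmod_def power_mult[symmetric])

lemma gradnorm_eq_simplex_residual:
  "gradnorm n a \<beta> y = sqrt 2 * sqrt (simplex_residual n a \<beta> (sqmod y) (lam n a \<beta> y))"
proof -
  have "cmod ((1/2) * complex_of_real r * w + complex_of_real (\<beta> * (cmod w)\<^sup>2) * w
      - complex_of_real l * w) = \<bar>r / 2 + \<beta> * (cmod w)\<^sup>2 - l\<bar> * cmod w" for r w l
  proof -
    have "(1/2) * complex_of_real r * w + complex_of_real (\<beta> * (cmod w)\<^sup>2) * w
        - complex_of_real l * w = complex_of_real (r / 2 + \<beta> * (cmod w)\<^sup>2 - l) * w"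
      by (simp add: algebra_simps)
    then show ?thesis by (simp only: norm_mult norm_of_real)
  qed
  then show ?thesis
    unfolding gradnorm_def simplex_residual_def sqmod_def
    by (simp add: power_mult_distrib mult.commute)
qed

lemma stationary_critical:
  assumes "stationary n a \<beta> z" "k < n" "0 < sqmod z k"
  shows "a k / 2 + \<beta> * sqmod z k = lam n a \<beta> z"
proof -
  have "simplex_residual n a \<beta> (sqmod z) (lam n a \<beta> z) = 0"
    using assms(1) unfolding stationary_def gradnorm_eq_simplex_residual by simp
  then have "sqmod z k * (a k / 2 + \<beta> * sqmod z k - lam n a \<beta> z)\<^sup>2 = 0"
    using assms(2) unfolding simplex_residual_def
    by (subst (asm) sum_nonneg_eq_0_iff) (auto simp: sqmod_def)
  then show ?thesis using assms(3) by simp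
qed

lemma sqmod_sum_csphere: "y \<in> csphere n \<Longrightarrow> (\<Sum>k<n. sqmod y k) = 1"
  unfolding csphere_def sqmod_def by simp

lemma sqmod_diff_le_cdist:
  assumes y: "y \<in> csphere n" and z: "z \<in> csphere n" and k: "k < n"
  shows "\<bar>sqmod y k - sqmod z k\<bar> \<le> 2 * cdist n y z"
proof -
  have le_one: "cmod (w k) \<le> 1" if "w \<in> csphere n" for w
    using le_one_of_sum_eq_one[of n "sqmod w" k] sqmod_sum_csphere[OF that] k
    unfolding sqmod_def by (simp add: abs_square_le_1)
  have "(cmod (y k - z k))\<^sup>2 \<le> (\<Sum>k<n. (cmod (y k - z k))\<^sup>2)"
    using k by (intro member_le_sum) auto
  then have dist: "cmod (y k - z k) \<le> cdist n y z"
    unfolding cdist_def by (metis norm_ge_zero real_sqrt_abs real_sqrt_le_mono abs_of_nonneg)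
  have "sqmod y k - sqmod z k = (cmod (y k) - cmod (z k)) * (cmod (y k) + cmod (z k))"
    unfolding sqmod_def by (simp add: power2_eq_square algebra_simps)
  then have "\<bar>sqmod y k - sqmod z k\<bar> = \<bar>cmod (y k) - cmod (z k)\<bar> * (cmod (y k) + cmod (z k))"
    by (simp add: abs_mult)
  also have "\<dots> \<le> cmod (y k - z k) * 2"
    using le_one[OF y] le_one[OF z] norm_triangle_ineq3[of "y k" "z k"] by (intro mult_mono) auto
  finally show ?thesis using dist by simp
qed

section \<open>Critical points on the simplex\<close>

locale simplex_critical_point =
  fixes n :: nat and a q :: "nat \<Rightarrow> real" and \<beta> \<mu> :: real
  assumes beta_pos: "0 < \<beta>"
    and q_nonneg: "\<And>k. k < n \<Longrightarrow> 0 \<le> q k"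
    and q_sum: "(\<Sum>k<n. q k) = 1"
    and critical: "\<And>k. k < n \<Longrightarrow> 0 < q k \<Longrightarrow> a k / 2 + \<beta> * q k = \<mu>"
begin

definition support :: "nat set" where
  "support = {k. k < n \<and> 0 < q k}"

definition excess :: "nat \<Rightarrow> real" where
  "excess k = a k / 2 + \<beta> * q k - \<mu>"

lemma finite_support: "finite support"
  unfolding support_def by simp

lemma support_nonempty: "support \<noteq> {}"
proof
  assume "support = {}"
  then have "\<forall>k<n. q k = 0"
    using q_nonneg unfolding support_def by (auto simp: less_le)
  then show False using q_sum by simp
qed

lemma excess_support: "k \<in> support \<Longrightarrow> excess k = 0"
  unfolding support_def excess_def using critical by simp

lemma q_off_support: "k < n \<Longrightarrow> k \<notin> support \<Longrightarrow> q k = 0"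
  unfolding support_def using q_nonneg by (simp add: less_le)

definition support_floor :: real where
  "support_floor = Min (q ` support) / 2"

lemma support_floor_pos: "0 < support_floor"
  unfolding support_floor_def using finite_support support_nonempty
  by (simp add: support_def)

lemma support_floor_le: "k \<in> support \<Longrightarrow> 2 * support_floor \<le> q k"
  unfolding support_floor_def using finite_support by simp

definition excess_floor :: real where
  "excess_floor = Min (insert 1 ((\<lambda>k. \<bar>excess k\<bar>) ` {k. k < n \<and> excess k \<noteq> 0}))"

lemma excess_floor_pos: "0 < excess_floor"
  unfolding excess_floor_def by (subst Min_gr_iff) auto

lemma excess_floor_le: "k < n \<Longrightarrow> excess k \<noteq> 0 \<Longrightarrow> excess_floor \<le> \<bar>excess k\<bar>"
  unfolding excess_floor_def by (intro Min_le) auto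

definition excess_total :: real where
  "excess_total = (\<Sum>k<n. \<bar>excess k\<bar>)"

lemma excess_le_total: "k < n \<Longrightarrow> \<bar>excess k\<bar> \<le> excess_total"
  unfolding excess_total_def by (intro member_le_sum) auto

lemma excess_total_nonneg: "0 \<le> excess_total"
  unfolding excess_total_def by (intro sum_nonneg) auto

definition radius :: real where
  "radius = min support_floor (excess_floor / (8 * \<beta> * (n + 1)))"

lemma radius_pos: "0 < radius"
  unfolding radius_def using support_floor_pos excess_floor_pos beta_pos by simp

lemma radius_le_support_floor: "radius \<le> support_floor"
  unfolding radius_def by simp

lemma beta_radius_le: "\<beta> * (n * radius) \<le> excess_floor / 8" "\<beta> * radius \<le> excess_floor / 8"
proof -
  have "radius \<le> excess_floor / (8 * \<beta> * (n + 1))"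
    unfolding radius_def by simp
  then have "radius * (8 * \<beta> * (n + 1)) \<le> excess_floor"
    using beta_pos by (subst (asm) pos_le_divide_eq) auto
  moreover have "\<beta> * (n * radius) + \<beta> * radius = radius * (8 * \<beta> * (n + 1)) / 8"
    by (simp add: algebra_simps)
  ultimately have "\<beta> * (n * radius) + \<beta> * radius \<le> excess_floor / 8"
    by linarith
  moreover have "0 \<le> \<beta> * (n * radius)" "0 \<le> \<beta> * radius"
    using beta_pos radius_pos by auto
  ultimately show "\<beta> * (n * radius) \<le> excess_floor / 8" "\<beta> * radius \<le> excess_floor / 8"
    by linarith+
qed

definition threshold :: real where
  "threshold = min support_floor (excess_floor / 8)"

lemma threshold_pos: "0 < threshold"
  unfolding threshold_def using support_floor_pos excess_floor_pos by simp

definition growth :: real where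
  "growth = max 1 (max (2 / \<beta>) (4 / \<beta>\<^sup>2))"

lemma growth_bounds: "1 \<le> growth" "2 / \<beta> \<le> growth" "4 / \<beta>\<^sup>2 \<le> growth"
  unfolding growth_def by auto

lemma simplex_obj_diff:
  assumes "(\<Sum>k<n. p k) = 1"
  shows "simplex_obj n a \<beta> p - simplex_obj n a \<beta> q
    = (\<Sum>k<n. excess k * (p k - q k) + \<beta> / 2 * (p k - q k)\<^sup>2)"
proof -
  have "simplex_obj n a \<beta> p - simplex_obj n a \<beta> q
      = (\<Sum>k<n. \<mu> * (p k - q k) + (excess k * (p k - q k) + \<beta> / 2 * (p k - q k)\<^sup>2))"
    unfolding simplex_obj_def sum_subtractf[symmetric]
    by (intro sum.cong refl) (simp add: excess_def power2_eq_square field_simps)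
  also have "\<dots> = \<mu> * (\<Sum>k<n. p k - q k)
      + (\<Sum>k<n. excess k * (p k - q k) + \<beta> / 2 * (p k - q k)\<^sup>2)"
    by (simp add: sum.distrib sum_distrib_left)
  finally show ?thesis using assms q_sum by (simp add: sum_subtractf)
qed

lemma simplex_obj_diff_bounded:
  assumes p_nonneg: "\<And>k. k < n \<Longrightarrow> 0 \<le> p k" and p_sum: "(\<Sum>k<n. p k) = 1"
  shows "\<bar>simplex_obj n a \<beta> p - simplex_obj n a \<beta> q\<bar> \<le> excess_total + n * \<beta> / 2"
proof -
  have "\<bar>excess k * (p k - q k) + \<beta> / 2 * (p k - q k)\<^sup>2\<bar> \<le> \<bar>excess k\<bar> + \<beta> / 2" if "k < n" for k
  proof -
    have d: "\<bar>p k - q k\<bar> \<le> 1"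
      using le_one_of_sum_eq_one[OF p_nonneg p_sum that] le_one_of_sum_eq_one[OF q_nonneg q_sum that]
        p_nonneg[OF that] q_nonneg[OF that]
      by linarith
    then have "(p k - q k)\<^sup>2 \<le> 1" by (simp add: abs_square_le_1)
    moreover have "\<bar>excess k * (p k - q k)\<bar> \<le> \<bar>excess k\<bar>"
      using d by (simp add: abs_mult mult_left_le)
    moreover have "\<bar>\<beta> / 2 * (p k - q k)\<^sup>2\<bar> \<le> \<beta> / 2"
      using beta_pos \<open>(p k - q k)\<^sup>2 \<le> 1\<close> by (simp add: mult_left_le)
    ultimately show ?thesis
      using abs_triangle_ineq[of "excess k * (p k - q k)" "\<beta> / 2 * (p k - q k)\<^sup>2"]
      by linarith
  qed
  then have "(\<Sum>k<n. \<bar>excess k * (p k - q k) + \<beta> / 2 * (p k - q k)\<^sup>2\<bar>)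
      \<le> (\<Sum>k<n. \<bar>excess k\<bar> + \<beta> / 2)"
    by (intro sum_mono) auto
  also have "\<dots> = excess_total + n * \<beta> / 2"
    unfolding excess_total_def by (simp add: sum.distrib)
  finally show ?thesis
    unfolding simplex_obj_diff[OF p_sum] by (rule order_trans[OF sum_abs])
qed

end

(* The residual is taken at the shifted multiplier \<mu> + s, and \<omega> stands for its cube root. *)
locale simplex_near_critical = simplex_critical_point +
  fixes p :: "nat \<Rightarrow> real" and s \<omega> :: real
  assumes p_nonneg: "\<And>k. k < n \<Longrightarrow> 0 \<le> p k"
    and p_sum: "(\<Sum>k<n. p k) = 1"
    and p_close: "\<And>k. k < n \<Longrightarrow> \<bar>p k - q k\<bar> < radius"
    and omega_nonneg: "0 \<le> \<omega>"
    and omega_small: "\<omega> < threshold"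
    and residual_le: "simplex_residual n a \<beta> p (\<mu> + s) \<le> \<omega> ^ 3"
begin

lemma residual_term_le:
  assumes "k < n"
  shows "p k * (excess k + \<beta> * (p k - q k) - s)\<^sup>2 \<le> \<omega> ^ 3"
proof -
  have "p k * (excess k + \<beta> * (p k - q k) - s)\<^sup>2 = p k * (a k / 2 + \<beta> * p k - (\<mu> + s))\<^sup>2"
    by (simp add: excess_def algebra_simps)
  also have "\<dots> \<le> simplex_residual n a \<beta> p (\<mu> + s)"
    unfolding simplex_residual_def using assms p_nonneg by (intro member_le_sum) auto
  finally show ?thesis using residual_le by simp
qed

lemma support_shift_le:
  assumes "k \<in> support"
  shows "\<bar>\<beta> * (p k - q k) - s\<bar> \<le> \<omega>"
proof -
  have k: "k < n" using assms unfolding support_def by simp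
  have "support_floor \<le> p k"
    using support_floor_le[OF assms] p_close[OF k] radius_le_support_floor by linarith
  then have "support_floor * (\<beta> * (p k - q k) - s)\<^sup>2 \<le> p k * (\<beta> * (p k - q k) - s)\<^sup>2"
    by (intro mult_right_mono) auto
  also have "\<dots> \<le> \<omega> ^ 3"
    using residual_term_le[OF k] excess_support[OF assms] by simp
  also have "\<dots> = \<omega> * \<omega>\<^sup>2"
    by (simp add: power3_eq_cube power2_eq_square)
  also have "\<dots> \<le> support_floor * \<omega>\<^sup>2"
    using omega_small omega_nonneg unfolding threshold_def by (intro mult_right_mono) auto
  finally have "(\<beta> * (p k - q k) - s)\<^sup>2 \<le> \<omega>\<^sup>2"
    using support_floor_pos by simp
  then show ?thesis using omega_nonneg power2_le_iff_abs_le by blast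
qed

lemma off_support_lt_radius: "k < n \<Longrightarrow> k \<notin> support \<Longrightarrow> p k < radius"
  using p_close[of k] q_off_support[of k] by simp

definition escaped_mass :: real where
  "escaped_mass = (\<Sum>k\<in>{..<n} - support. p k)"

lemma escaped_mass_nonneg: "0 \<le> escaped_mass"
  unfolding escaped_mass_def using p_nonneg by (intro sum_nonneg) auto

lemma support_shift_sum: "(\<Sum>k\<in>support. p k - q k) = - escaped_mass"
proof -
  have sub: "support \<subseteq> {..<n}" unfolding support_def by auto
  have "(\<Sum>k<n. p k - q k) = 0"
    using p_sum q_sum by (simp add: sum_subtractf)
  moreover have "(\<Sum>k<n. p k - q k) = (\<Sum>k\<in>support. p k - q k) + escaped_mass"
    unfolding escaped_mass_def
    using sum.subset_diff[OF sub, of "\<lambda>k. p k - q k"] q_off_support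
    by (simp add: add.commute)
  ultimately show ?thesis by simp
qed

lemma escaped_mass_le_radius: "escaped_mass \<le> n * radius"
proof -
  have "escaped_mass \<le> (\<Sum>k\<in>{..<n} - support. radius)"
    unfolding escaped_mass_def
    using off_support_lt_radius by (intro sum_mono) (simp add: less_imp_le)
  also have "\<dots> \<le> n * radius"
    using radius_pos card_mono[of "{..<n}" "{..<n} - support"] by (simp add: mult_right_mono)
  finally show ?thesis .
qed

lemma shift_upper: "s \<le> \<omega>"
proof -
  obtain j where j: "j \<in> support" "p j - q j \<le> 0"
  proof (rule ccontr)
    assume "\<not> thesis"
    then have "\<forall>j\<in>support. 0 < p j - q j" by (meson not_le that)
    then have "0 < (\<Sum>k\<in>support. p k - q k)"
      using finite_support support_nonempty by (intro sum_pos) auto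
    then show False using support_shift_sum escaped_mass_nonneg by simp
  qed
  have "\<beta> * (p j - q j) \<le> 0" using j(2) beta_pos by (simp add: mult_nonneg_nonpos)
  then show ?thesis using support_shift_le[OF j(1)] by linarith
qed

lemma shift_lower: "- \<omega> - \<beta> * escaped_mass \<le> s"
proof -
  obtain j where j: "j \<in> support" "- escaped_mass \<le> p j - q j"
  proof (rule ccontr)
    assume "\<not> thesis"
    then have "\<forall>j\<in>support. p j - q j < - escaped_mass" by (meson not_le that)
    then have "(\<Sum>k\<in>support. p k - q k) < (\<Sum>k\<in>support. - escaped_mass)"
      using finite_support support_nonempty by (intro sum_strict_mono) auto
    also have "\<dots> = - (card support * escaped_mass)"
      by simp
    also have "\<dots> \<le> - escaped_mass"
      using escaped_mass_nonneg card_gt_0_iff[of support] finite_support support_nonempty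
      by (simp add: mult_le_cancel_right1)
    finally show False using support_shift_sum by simp
  qed
  then show ?thesis
    using support_shift_le[OF j(1)] beta_pos mult_left_mono[OF j(2), of \<beta>] by simp
qed

lemma shift_abs_le_mass: "\<bar>s\<bar> \<le> \<omega> + \<beta> * escaped_mass"
  using shift_upper shift_lower mult_nonneg_nonneg[OF less_imp_le[OF beta_pos] escaped_mass_nonneg]
  unfolding abs_le_iff by linarith

lemma shift_abs_le: "\<bar>s\<bar> \<le> excess_floor / 4"
proof -
  have "\<beta> * escaped_mass \<le> \<beta> * (n * radius)"
    using escaped_mass_le_radius beta_pos by (intro mult_left_mono) auto
  moreover have "\<omega> \<le> excess_floor / 8" using omega_small unfolding threshold_def by simp
  ultimately show ?thesis using shift_abs_le_mass beta_radius_le(1) by linarith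
qed

lemma off_support_residual_le:
  "k < n \<Longrightarrow> k \<notin> support \<Longrightarrow> p k * (excess k + \<beta> * p k - s)\<^sup>2 \<le> \<omega> ^ 3"
  using residual_term_le q_off_support by fastforce

lemma off_support_active_mass_le:
  assumes k: "k < n" "k \<notin> support" and e: "excess k \<noteq> 0"
  shows "p k * excess_floor\<^sup>2 \<le> 4 * \<omega> ^ 3"
proof -
  have "\<beta> * p k \<le> \<beta> * radius"
    using off_support_lt_radius[OF k] beta_pos by (intro mult_left_mono) auto
  then have "\<beta> * p k \<le> excess_floor / 8"
    using beta_radius_le(2) by linarith
  moreover have "0 \<le> \<beta> * p k"
    using p_nonneg[OF k(1)] beta_pos by simp
  ultimately have "excess_floor / 2 \<le> \<bar>excess k + \<beta> * p k - s\<bar>"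
    using excess_floor_le[OF k(1) e] shift_abs_le by linarith
  then have "(excess_floor / 2)\<^sup>2 \<le> (excess k + \<beta> * p k - s)\<^sup>2"
    using excess_floor_pos by (metis abs_le_square_iff abs_of_pos half_gt_zero)
  then have "p k * (excess_floor / 2)\<^sup>2 \<le> \<omega> ^ 3"
    using off_support_residual_le[OF k] p_nonneg[OF k(1)] by (meson mult_left_mono order_trans)
  then show ?thesis by (simp add: power2_eq_square)
qed

lemma off_support_active_le:
  assumes k: "k < n" "k \<notin> support" and e: "excess k \<noteq> 0"
  shows "p k \<le> \<omega>"
proof -
  have "p k * excess_floor\<^sup>2 \<le> 4 * \<omega>\<^sup>2 * \<omega>"
    using off_support_active_mass_le[OF k e] by (simp add: power3_eq_cube power2_eq_square)
  also have "\<dots> \<le> \<omega> * excess_floor\<^sup>2"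
  proof -
    have "2 * \<omega> \<le> excess_floor"
      using omega_small omega_nonneg unfolding threshold_def by simp
    then have "(2 * \<omega>)\<^sup>2 \<le> excess_floor\<^sup>2"
      using omega_nonneg by (intro power_mono) auto
    then have "4 * \<omega>\<^sup>2 * \<omega> \<le> excess_floor\<^sup>2 * \<omega>"
      using omega_nonneg by (intro mult_right_mono) (auto simp: power_mult_distrib)
    then show ?thesis by (simp only: mult.commute)
  qed
  finally show ?thesis
    using excess_floor_pos by simp
qed

lemma off_support_inactive_le:
  assumes k: "k < n" "k \<notin> support" and e: "excess k = 0"
  shows "p k \<le> growth * \<omega>"
proof (cases "2 * \<omega> \<le> \<beta> * p k")
  case True
  note growth = growth_bounds
  have pk: "0 \<le> p k" using p_nonneg[OF k(1)] .
  have "\<beta> * p k / 2 \<le> \<beta> * p k - s" using True shift_upper by linarith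
  then have "(\<beta> * p k / 2)\<^sup>2 \<le> (\<beta> * p k - s)\<^sup>2"
    using pk beta_pos by (intro power_mono) auto
  then have "p k * (\<beta> * p k / 2)\<^sup>2 \<le> \<omega> ^ 3"
    using off_support_residual_le[OF k] e mult_left_mono[OF _ pk] by (metis add_0 order_trans)
  moreover have "p k * (\<beta> * p k / 2)\<^sup>2 = p k ^ 3 * (\<beta>\<^sup>2 / 4)"
    by (simp add: power2_eq_square power3_eq_cube)
  ultimately have "p k ^ 3 \<le> \<omega> ^ 3 / (\<beta>\<^sup>2 / 4)"
    using beta_pos by (simp add: pos_le_divide_eq)
  also have "\<dots> = 4 / \<beta>\<^sup>2 * \<omega> ^ 3"
    by simp
  also have "\<dots> \<le> growth ^ 3 * \<omega> ^ 3"
  proof -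
    have "growth ^ 1 \<le> growth ^ 3" using growth(1) by (intro power_increasing) auto
    then show ?thesis using growth(3) omega_nonneg by (intro mult_right_mono) auto
  qed
  finally have "p k ^ 3 \<le> (growth * \<omega>) ^ 3" by (simp add: power_mult_distrib)
  moreover have "0 \<le> growth * \<omega>" using growth(1) omega_nonneg by simp
  ultimately show ?thesis using pk power_mono_iff[of "p k" "growth * \<omega>" 3] by simp
next
  case False
  then have "p k \<le> 2 * \<omega> / \<beta>"
    using beta_pos by (simp add: pos_le_divide_eq mult.commute[of _ \<beta>])
  then show ?thesis using mult_right_mono[OF growth_bounds(2) omega_nonneg] by simp
qed

lemma off_support_le_growth: "k < n \<Longrightarrow> k \<notin> support \<Longrightarrow> p k \<le> growth * \<omega>"
  using off_support_active_le off_support_inactive_le mult_right_mono[OF growth_bounds(1) omega_nonneg]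
  by (cases "excess k = 0") force+


lemma escaped_mass_le: "escaped_mass \<le> n * growth * \<omega>"
proof -
  have "escaped_mass \<le> (\<Sum>k\<in>{..<n} - support. growth * \<omega>)"
    unfolding escaped_mass_def using off_support_le_growth by (intro sum_mono) auto
  also have "\<dots> = card ({..<n} - support) * (growth * \<omega>)"
    by simp
  also have "\<dots> \<le> n * (growth * \<omega>)"
    using card_mono[of "{..<n}" "{..<n} - support"] growth_bounds(1) omega_nonneg
    by (intro mult_right_mono) auto
  finally show ?thesis by simp
qed

lemma weight_shift_le:
  assumes k: "k < n"
  shows "\<beta> * \<bar>p k - q k\<bar> \<le> (2 + \<beta> * n * growth) * \<omega>"
proof (cases "k \<in> support")
  case True
  have "\<beta> * escaped_mass \<le> \<beta> * (n * growth * \<omega>)"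
    using escaped_mass_le beta_pos by (intro mult_left_mono) auto
  moreover have "\<beta> * \<bar>p k - q k\<bar> \<le> \<bar>\<beta> * (p k - q k) - s\<bar> + \<bar>s\<bar>"
    using beta_pos abs_triangle_ineq4[of "\<beta> * (p k - q k)" s] by (simp add: abs_mult)
  ultimately show ?thesis
    using support_shift_le[OF True] shift_abs_le_mass by (simp add: algebra_simps)
next
  case False
  have "\<beta> * p k \<le> \<beta> * (growth * \<omega>)"
    using off_support_le_growth[OF k False] beta_pos by (intro mult_left_mono) auto
  also have "\<dots> \<le> (2 + \<beta> * n * growth) * \<omega>"
  proof -
    have "\<beta> * growth * 1 \<le> \<beta> * growth * n"
      using k beta_pos growth_bounds(1) by (intro mult_left_mono) auto
    then have "\<beta> * growth \<le> 2 + \<beta> * n * growth"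
      by (simp add: mult_ac)
    then show ?thesis using omega_nonneg by (simp add: mult.assoc[symmetric] mult_right_mono)
  qed
  finally show ?thesis using q_off_support[OF k False] p_nonneg[OF k] by simp
qed

lemma excess_shift_le:
  assumes k: "k < n"
  shows "\<bar>excess k * (p k - q k)\<bar> \<le> 4 * excess_total / excess_floor\<^sup>2 * \<omega> ^ 3"
proof (cases "k \<notin> support \<and> excess k \<noteq> 0")
  case True
  then have "p k \<le> 4 * \<omega> ^ 3 / excess_floor\<^sup>2"
    using off_support_active_mass_le[OF k] excess_floor_pos by (simp add: pos_le_divide_eq)
  then have "\<bar>excess k\<bar> * p k \<le> excess_total * (4 * \<omega> ^ 3 / excess_floor\<^sup>2)"
    using excess_le_total[OF k] p_nonneg[OF k] by (intro mult_mono) auto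
  then show ?thesis
    using True q_off_support[OF k] p_nonneg[OF k] by (simp add: abs_mult algebra_simps)
next
  case False
  then have "excess k = 0" using excess_support q_off_support[OF k] by blast
  then show ?thesis
    using excess_floor_pos omega_nonneg excess_le_total[OF k] by simp
qed

lemma simplex_obj_diff_le:
  "\<bar>simplex_obj n a \<beta> p - simplex_obj n a \<beta> q\<bar>
    \<le> n * (4 * excess_total * threshold / excess_floor\<^sup>2 + (2 + \<beta> * n * growth)\<^sup>2 / (2 * \<beta>))
        * \<omega>\<^sup>2"
proof -
  define C where "C = 4 * excess_total * threshold / excess_floor\<^sup>2 + (2 + \<beta> * n * growth)\<^sup>2 / (2 * \<beta>)"
  have "\<bar>excess k * (p k - q k) + \<beta> / 2 * (p k - q k)\<^sup>2\<bar> \<le> C * \<omega>\<^sup>2" if k: "k < n" for k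
  proof -
    have "\<bar>excess k * (p k - q k)\<bar> \<le> 4 * excess_total * \<omega> / excess_floor\<^sup>2 * \<omega>\<^sup>2"
      using excess_shift_le[OF k] by (simp add: power3_eq_cube power2_eq_square)
    also have "\<dots> \<le> 4 * excess_total * threshold / excess_floor\<^sup>2 * \<omega>\<^sup>2"
    proof -
      have "4 * excess_total * \<omega> \<le> 4 * excess_total * threshold"
        using omega_small excess_total_nonneg by (intro mult_left_mono) auto
      then show ?thesis by (intro mult_right_mono divide_right_mono) auto
    qed
    finally have e: "\<bar>excess k * (p k - q k)\<bar> \<le> 4 * excess_total * threshold / excess_floor\<^sup>2 * \<omega>\<^sup>2" .
    have "\<beta> / 2 * (p k - q k)\<^sup>2 = (\<beta> * \<bar>p k - q k\<bar>)\<^sup>2 / (2 * \<beta>)"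
      using beta_pos by (simp add: power_mult_distrib power2_eq_square)
    also have "\<dots> \<le> ((2 + \<beta> * n * growth) * \<omega>)\<^sup>2 / (2 * \<beta>)"
      using weight_shift_le[OF k] beta_pos by (intro divide_right_mono power_mono) auto
    also have "\<dots> = (2 + \<beta> * n * growth)\<^sup>2 / (2 * \<beta>) * \<omega>\<^sup>2"
      by (simp add: power_mult_distrib)
    finally have "\<beta> / 2 * (p k - q k)\<^sup>2 \<le> (2 + \<beta> * n * growth)\<^sup>2 / (2 * \<beta>) * \<omega>\<^sup>2" .
    moreover have "0 \<le> \<beta> / 2 * (p k - q k)\<^sup>2" using beta_pos by simp
    ultimately show ?thesis
      unfolding C_def using e abs_triangle_ineq[of "excess k * (p k - q k)" "\<beta> / 2 * (p k - q k)\<^sup>2"]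
      by (simp add: distrib_right)
  qed
  then have "(\<Sum>k<n. \<bar>excess k * (p k - q k) + \<beta> / 2 * (p k - q k)\<^sup>2\<bar>) \<le> (\<Sum>k<n. C * \<omega>\<^sup>2)"
    by (intro sum_mono) auto
  also have "\<dots> = n * C * \<omega>\<^sup>2"
    by simp
  finally have "(\<Sum>k<n. \<bar>excess k * (p k - q k) + \<beta> / 2 * (p k - q k)\<^sup>2\<bar>) \<le> n * C * \<omega>\<^sup>2" .
  then show ?thesis
    unfolding simplex_obj_diff[OF p_sum] C_def by (rule order_trans[OF sum_abs])
qed

end

section \<open>The Lojasiewicz inequality with exponent 1/4\<close>

context simplex_critical_point
begin

lemma simplex_obj_diff_cube_le:
  "\<exists>K\<ge>0. \<forall>p l. (\<forall>k<n. 0 \<le> p k) \<longrightarrow> (\<Sum>k<n. p k) = 1 \<longrightarrow> (\<forall>k<n. \<bar>p k - q k\<bar> < radius) \<longrightarrow>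
     \<bar>simplex_obj n a \<beta> p - simplex_obj n a \<beta> q\<bar> ^ 3 \<le> K * (simplex_residual n a \<beta> p l)\<^sup>2"
proof (intro exI conjI allI impI)
  define C where "C = n * (4 * excess_total * threshold / excess_floor\<^sup>2 + (2 + \<beta> * n * growth)\<^sup>2 / (2 * \<beta>))"
  define M where "M = excess_total + n * \<beta> / 2"
  have M: "0 \<le> M" unfolding M_def using excess_total_nonneg beta_pos by simp
  show "0 \<le> max (C ^ 3) ((M / threshold\<^sup>2) ^ 3)"
    using M by (simp add: le_max_iff_disj)
  fix p :: "nat \<Rightarrow> real" and l :: real
  assume p_nonneg: "\<forall>k<n. 0 \<le> p k" and p_sum: "(\<Sum>k<n. p k) = 1"
    and p_close: "\<forall>k<n. \<bar>p k - q k\<bar> < radius"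
  define X where "X = \<bar>simplex_obj n a \<beta> p - simplex_obj n a \<beta> q\<bar>"
  define V where "V = simplex_residual n a \<beta> p l"
  define \<omega> where "\<omega> = root 3 V"
  have X: "0 \<le> X" unfolding X_def by simp
  have V: "0 \<le> V" unfolding V_def using p_nonneg by (intro simplex_residual_nonneg) auto
  then have \<omega>: "0 \<le> \<omega>" "\<omega> ^ 3 = V" unfolding \<omega>_def by simp_all
  have "X ^ 3 \<le> C ^ 3 * V\<^sup>2"
    if small: "\<omega> < threshold"
  proof -
    interpret simplex_near_critical n a q \<beta> \<mu> p "l - \<mu>" \<omega>
      using p_nonneg p_sum p_close \<omega> small unfolding V_def
      by unfold_locales auto
    have "X ^ 3 \<le> C ^ 3 * (\<omega> ^ 3)\<^sup>2"
      using cube_le_of_le_sq[OF X] simplex_obj_diff_le unfolding X_def C_def by blast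
    then show ?thesis using \<omega>(2) by simp
  qed
  moreover have "X ^ 3 \<le> (M / threshold\<^sup>2) ^ 3 * V\<^sup>2"
    if large: "threshold \<le> \<omega>"
  proof -
    have "X \<le> M / threshold\<^sup>2 * threshold\<^sup>2"
      using simplex_obj_diff_bounded p_nonneg p_sum threshold_pos unfolding X_def M_def by simp
    also have "\<dots> \<le> M / threshold\<^sup>2 * \<omega>\<^sup>2"
      using large threshold_pos M by (intro mult_left_mono power_mono) auto
    finally have "X ^ 3 \<le> (M / threshold\<^sup>2) ^ 3 * (\<omega> ^ 3)\<^sup>2"
      by (rule cube_le_of_le_sq[OF X])
    then show ?thesis using \<omega>(2) by simp
  qed
  ultimately show "X ^ 3 \<le> max (C ^ 3) ((M / threshold\<^sup>2) ^ 3) * V\<^sup>2"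
    by (meson not_le max.cobounded1 max.cobounded2 mult_right_mono zero_le_power2 order_trans)
qed

end

lemma simplex_critical_point_stationary:
  assumes "0 < \<beta>" "stationary n a \<beta> z"
  shows "simplex_critical_point n a (sqmod z) \<beta> (lam n a \<beta> z)"
  using assms sqmod_sum_csphere stationary_critical
  by unfold_locales (auto simp: sqmod_def stationary_def)

lemma loj_at_quarter_stationary:
  assumes beta_pos: "0 < \<beta>" and stat: "stationary n a \<beta> z"
  shows "loj_at n a \<beta> (1/4) z"
proof -
  have z: "z \<in> csphere n" using stat unfolding stationary_def by simp
  interpret simplex_critical_point n a "sqmod z" \<beta> "lam n a \<beta> z"
    using simplex_critical_point_stationary[OF assms] .
  obtain K where K: "0 \<le> K" and cube: "\<And>p l. \<forall>k<n. 0 \<le> p k \<Longrightarrow> (\<Sum>k<n. p k) = 1 \<Longrightarrow>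
      \<forall>k<n. \<bar>p k - sqmod z k\<bar> < radius \<Longrightarrow>
      \<bar>simplex_obj n a \<beta> p - simplex_obj n a \<beta> (sqmod z)\<bar> ^ 3 \<le> K * (simplex_residual n a \<beta> p l)\<^sup>2"
    using simplex_obj_diff_cube_le by blast
  show ?thesis
    unfolding loj_at_def
  proof (intro exI conjI ballI impI)
    show "0 < radius / 2"
      using radius_pos by simp
    show "0 < K powr (1/4) + 1"
      using powr_ge_zero[of K "1/4"] by linarith
    fix y assume y: "y \<in> csphere n" and close: "cdist n y z < radius / 2"
    define V where "V = simplex_residual n a \<beta> (sqmod y) (lam n a \<beta> y)"
    have V: "0 \<le> V" unfolding V_def by (intro simplex_residual_nonneg) (simp add: sqmod_def)
    have "\<bar>fobj n a \<beta> y - fobj n a \<beta> z\<bar> ^ 3 \<le> K * V\<^sup>2"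
      unfolding fobj_eq_simplex_obj V_def
      using sqmod_diff_le_cdist[OF y z] close sqmod_sum_csphere[OF y]
      by (intro cube) (fastforce simp: sqmod_def)+
    then have "\<bar>fobj n a \<beta> y - fobj n a \<beta> z\<bar> powr (3/4) \<le> K powr (1/4) * sqrt V"
      using K V by (intro powr_three_quarters_le) auto
    also have "\<dots> \<le> (K powr (1/4) + 1) * (sqrt 2 * sqrt V)"
      using V mult_right_mono[of 1 "sqrt 2" "sqrt V"] by (intro mult_mono) auto
    finally show "\<bar>fobj n a \<beta> y - fobj n a \<beta> z\<bar> powr (1 - 1/4) \<le> (K powr (1/4) + 1) * gradnorm n a \<beta> y"
      unfolding gradnorm_eq_simplex_residual V_def by simp
  qed
qed

theorem kl_holds_quarter: "0 < \<beta> \<Longrightarrow> kl_holds n a \<beta> (1/4)"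
  unfolding kl_holds_def using loj_at_quarter_stationary by blast

section \<open>Sharpness of the exponent\<close>

definition sharp_a :: "nat \<Rightarrow> real" where
  "sharp_a k = (if k = 1 then 2 else 0)"

definition sharp_point :: "nat \<Rightarrow> complex" where
  "sharp_point k = (if k = 0 then 1 else 0)"

definition sharp_path :: "real \<Rightarrow> nat \<Rightarrow> complex" where
  "sharp_path t k = (if k = 0 then sqrt (1 - t) else if k = 1 then sqrt t else 0)"

lemma sum_lessThan_2: "(\<Sum>k<(2::nat). f k) = f 0 + (f 1 :: real)"
  by (simp add: numeral_2_eq_2)

lemma sqmod_sharp_path:
  assumes "0 \<le> t" "t \<le> 1"
  shows "sqmod (sharp_path t) 0 = 1 - t" "sqmod (sharp_path t) 1 = t"
  using assms by (simp_all add: sqmod_def sharp_path_def)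

lemma sharp_path_csphere: "0 \<le> t \<Longrightarrow> t \<le> 1 \<Longrightarrow> sharp_path t \<in> csphere 2"
  using sqmod_sharp_path unfolding csphere_def sum_lessThan_2 by (simp add: sqmod_def)

lemma sharp_point_stationary: "stationary 2 sharp_a 1 sharp_point"
proof -
  have "lam 2 sharp_a 1 sharp_point = 1"
    unfolding lam_eq_sum_sqmod sum_lessThan_2 by (simp add: sqmod_def sharp_point_def sharp_a_def)
  then show ?thesis
    unfolding stationary_def csphere_def gradnorm_eq_simplex_residual simplex_residual_def
      sum_lessThan_2
    by (simp add: sqmod_def sharp_point_def sharp_a_def)
qed

lemma fobj_sharp_path:
  assumes "0 \<le> t" "t \<le> 1"
  shows "fobj 2 sharp_a 1 (sharp_path t) - fobj 2 sharp_a 1 sharp_point = t\<^sup>2"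
  unfolding fobj_eq_simplex_obj simplex_obj_def sum_lessThan_2 sqmod_sharp_path[OF assms]
  by (simp add: sqmod_def sharp_point_def sharp_a_def power2_eq_square field_simps)

lemma gradnorm_sharp_path_le:
  assumes "0 \<le> t" "t \<le> 1"
  shows "gradnorm 2 sharp_a 1 (sharp_path t) \<le> 4 * t powr (3/2)"
proof -
  have lam: "lam 2 sharp_a 1 (sharp_path t) = 1 - t + 2 * t\<^sup>2"
    unfolding lam_eq_sum_sqmod sum_lessThan_2 sqmod_sharp_path[OF assms]
    by (simp add: sharp_a_def power2_eq_square algebra_simps)
  have "gradnorm 2 sharp_a 1 (sharp_path t) = sqrt 2 * sqrt (4 * t ^ 3 * (1 - t))"
    unfolding gradnorm_eq_simplex_residual lam simplex_residual_def sum_lessThan_2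
      sqmod_sharp_path[OF assms]
    by (simp add: sharp_a_def power2_eq_square power3_eq_cube algebra_simps)
  also have "\<dots> \<le> 2 * sqrt (4 * t ^ 3)"
  proof -
    have "sqrt (4 * t ^ 3 * (1 - t)) \<le> sqrt (4 * t ^ 3)"
      using assms by (intro real_sqrt_le_mono) (simp add: mult_left_le)
    then show ?thesis using real_sqrt_le_mono[of 2 4] assms by (intro mult_mono) simp_all
  qed
  also have "\<dots> = 4 * t powr (3/2)"
    using assms by (simp add: real_sqrt_mult powr_half_sqrt_powr)
  finally show ?thesis .
qed

lemma cdist_sharp_path_le:
  assumes "0 \<le> t" "t \<le> 1"
  shows "cdist 2 (sharp_path t) sharp_point \<le> sqrt (2 * t)"
proof -
  have "sharp_path t 0 - sharp_point 0 = complex_of_real (sqrt (1 - t) - 1)"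
    by (simp add: sharp_path_def sharp_point_def)
  then have "(cmod (sharp_path t 0 - sharp_point 0))\<^sup>2 = (1 - sqrt (1 - t))\<^sup>2"
    by (simp only: norm_of_real power2_abs) (rule power2_commute)
  also have "\<dots> \<le> t\<^sup>2"
  proof -
    have "1 - t \<le> sqrt (1 - t)" using assms by (simp add: real_le_rsqrt power2_eq_square mult_left_le)
    then show ?thesis using assms by (intro power_mono) auto
  qed
  also have "\<dots> \<le> t" using assms by (simp add: power2_eq_square mult_left_le)
  finally have "(cmod (sharp_path t 0 - sharp_point 0))\<^sup>2 \<le> t" .
  moreover have "(cmod (sharp_path t 1 - sharp_point 1))\<^sup>2 = t"
    using assms by (simp add: sharp_path_def sharp_point_def)
  ultimately show ?thesis
    unfolding cdist_def sum_lessThan_2 by (intro real_sqrt_le_mono) simp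
qed

lemma eventually_at_right_0_small:
  fixes \<delta> \<alpha> C :: real
  assumes "0 < \<delta>" "0 < \<alpha>"
  shows "\<forall>\<^sub>F t in at_right 0. 0 < t \<and> t < 1 \<and> sqrt (2 * t) < \<delta> \<and> C * t powr \<alpha> < 1"
proof (intro eventually_conj)
  show "\<forall>\<^sub>F t in at_right 0. 0 < (t::real)"
    by (rule eventually_at_right_less)
  show "\<forall>\<^sub>F t in at_right 0. t < (1::real)"
    by (rule order_tendstoD(2)[OF tendsto_ident_at]) simp
  have "((\<lambda>t. sqrt (2 * t)) \<longlongrightarrow> sqrt (2 * 0)) (at_right 0)"
    by (intro tendsto_intros)
  then show "\<forall>\<^sub>F t in at_right 0. sqrt (2 * t) < \<delta>"
    using assms(1) by (intro order_tendstoD(2)) auto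
  have "((\<lambda>t. t powr \<alpha>) \<longlongrightarrow> 0) (at_right 0)"
    using assms(2) eventually_at_right_less[of 0]
    by (intro tendsto_zero_powrI tendsto_ident_at tendsto_const) (auto elim: eventually_mono)
  then have "((\<lambda>t. C * t powr \<alpha>) \<longlongrightarrow> C * 0) (at_right 0)"
    by (intro tendsto_intros)
  then show "\<forall>\<^sub>F t in at_right 0. C * t powr \<alpha> < 1"
    by (intro order_tendstoD(2)) auto
qed

lemma not_loj_at_sharp_point:
  assumes "1/4 < \<theta>"
  shows "\<not> loj_at 2 sharp_a 1 \<theta> sharp_point"
proof
  assume "loj_at 2 sharp_a 1 \<theta> sharp_point"
  then obtain \<delta> \<eta> where "0 < \<delta>" "0 < \<eta>" and loj: "\<And>y. y \<in> csphere 2 \<Longrightarrow> cdist 2 y sharp_point < \<delta> \<Longrightarrow>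
      \<bar>fobj 2 sharp_a 1 y - fobj 2 sharp_a 1 sharp_point\<bar> powr (1 - \<theta>) \<le> \<eta> * gradnorm 2 sharp_a 1 y"
    unfolding loj_at_def by blast
  define \<alpha> where "\<alpha> = 2 * \<theta> - 1/2"
  have "0 < \<alpha>" using assms unfolding \<alpha>_def by simp
  obtain t where t: "0 < t" "t < 1" "sqrt (2 * t) < \<delta>" "4 * \<eta> * t powr \<alpha> < 1"
    using eventually_happens'[OF _ eventually_at_right_0_small[OF \<open>0 < \<delta>\<close> \<open>0 < \<alpha>\<close>]]
      trivial_limit_at_right_real by blast
  have "cdist 2 (sharp_path t) sharp_point < \<delta>"
    using cdist_sharp_path_le[of t] t by simp
  then have "\<bar>fobj 2 sharp_a 1 (sharp_path t) - fobj 2 sharp_a 1 sharp_point\<bar> powr (1 - \<theta>)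
      \<le> \<eta> * gradnorm 2 sharp_a 1 (sharp_path t)"
    using loj sharp_path_csphere[of t] t by simp
  moreover have "\<eta> * gradnorm 2 sharp_a 1 (sharp_path t) \<le> \<eta> * (4 * t powr (3/2))"
    using gradnorm_sharp_path_le[of t] t \<open>0 < \<eta>\<close> by (intro mult_left_mono) auto
  ultimately have bound: "(t\<^sup>2) powr (1 - \<theta>) \<le> \<eta> * (4 * t powr (3/2))"
    using fobj_sharp_path[of t] t by simp
  have "(t\<^sup>2) powr (1 - \<theta>) = t powr (2 * (1 - \<theta>))"
    using t by (simp add: powr_powr flip: powr_numeral)
  then have "t powr (3/2) = (t\<^sup>2) powr (1 - \<theta>) * t powr \<alpha>"
    unfolding \<alpha>_def by (simp add: algebra_simps flip: powr_add)
  also have "\<dots> \<le> \<eta> * (4 * t powr (3/2)) * t powr \<alpha>"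
    using bound by (rule mult_right_mono) simp
  also have "\<dots> = (4 * \<eta> * t powr \<alpha>) * t powr (3/2)"
    by (simp add: mult_ac)
  also have "\<dots> < t powr (3/2)"
    using t by simp
  finally show False by simp
qed

lemma is_kl_exponent_sharp: "is_kl_exponent 2 sharp_a 1 (1/4)"
  unfolding is_kl_exponent_def
proof (intro conjI ballI impI)
  show "1/4 \<in> {0<..1/2::real}" by simp
  show "kl_holds 2 sharp_a 1 (1/4)" by (rule kl_holds_quarter) simp
  fix \<theta> :: real assume "kl_holds 2 sharp_a 1 \<theta>"
  then show "\<theta> \<le> 1/4"
    using not_loj_at_sharp_point sharp_point_stationary unfolding kl_holds_def by (meson not_le)
qed

theorem theorem15:
  shows "(\<forall>n (a :: nat \<Rightarrow> real) (\<beta>::real). \<beta> > 0 \<longrightarrow> kl_holds n a \<beta> (1/4))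
       \<and> (\<exists>n (a :: nat \<Rightarrow> real) (\<beta>::real). \<beta> > 0 \<and> is_kl_exponent n a \<beta> (1/4))"
proof (intro conjI allI impI)
  show "kl_holds n a \<beta> (1/4)" if "\<beta> > 0" for n a \<beta>
    using that by (rule kl_holds_quarter)
  show "\<exists>n a \<beta>. \<beta> > 0 \<and> is_kl_exponent n a \<beta> (1/4)"
    using is_kl_exponent_sharp by (intro exI[of _ 2] exI[of _ sharp_a] exI[of _ 1]) simp
qed

end
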